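(* Let $r:\mathcal T\to\mathbb N\cup\{0\}$ be a function satisfying: (1) $r(\mathscr X)=0$ if and only if $\mathscr X=\mathbf 0$, and $r(\mathscr X)=1$ if and only if $\mathscr X$ is a rank-one tensor; (2) $r$ is constant on equivalence classes of $\sim$; (3) if $\mathscr X$ is a tensor of order $N$ with $\mathscr X\neq\mathbf 0$ and $\mathscr X$ not rank-one, then with $S_0=\{M\mid \mathscr I_{M,N}\text{ is a subtensor of some }\mathscr Y\sim\mathscr X\}$ and $S_1=\{\operatorname{rank}(\mathbf A)\mid \mathbf A\text{ is a submatrix of some }\mathscr Y\sim\mathscr X\}$ we have $r(\mathscr X)=\max(S_0\cup S_1\cup\{2\})$. Then $r=\mu$, where $\mu(\mathscr X)=\min\{s(\mathscr X)\mid s\text{ is a QZC rank function}\}$ for every $\mathscr X\in\mathcal T$.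
   Context: $\mathcal T$ is the collection of all real tensors (of all orders $N\ge1$ and all sizes). A rank-one tensor is one of the form $\mathbf a^{(1)}\circ\cdots\circ\mathbf a^{(N)}$, i.e. $x_{i_1\cdots i_N}=a^{(1)}_{i_1}\cdots a^{(N)}_{i_N}$, with all $\mathbf a^{(n)}$ nonzero vectors. $\mathscr I_{M,N}$ is the order-$N$ tensor of size $M\times\cdots\times M$ with $1$ in positions $(i,\dots,i)$ and $0$ elsewhere. A subtensor of $\mathscr X\in\mathbb R^{I_1\times\cdots\times I_N}$ is a tensor $\mathscr Y\in\mathbb R^{J_1\times\cdots\times J_N}$ with $y_{j_1\cdots j_N}=x_{i_{1j_1}\cdots i_{Nj_N}}$ for some indices $1\le i_{n1}<\cdots<i_{nJ_n}\le I_n$. A submatrix of $\mathscr X$ means a subtensor with $J_n=1$ for all but at most two modes, viewed as a vector or matrix (a vector having rank $1$ if nonzero, $0$ otherwise). For $\pi\in S_N$ (the symmetric group on $\{1,\dots,N\}$), the mode-permutation of $\mathscr X$ is the tensor $\mathscr Y$ with $y_{i_1\cdots i_N}=x_{i_{\pi(1)}\cdots i_{\pi(N)}}$ (with correspondingly permuted dimensions). The relation $\sim$ is the smallest equivalence relation on $\mathcal T$ with $\mathscr X\sim\alpha\mathscr X$ for all $\alpha\in\mathbb R\setminus\{0\}$ and $\mathscr X\sim\mathscr Y$ whenever $\mathscr Y$ is a mode-permutation of $\mathscr X$. A QZC rank function is a function $s:\mathcal T\to\mathbb N\cup\{0\}$ such that: (QZC1) $s(\mathscr X)=0$ iff $\mathscr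 X=\mathbf 0$, and $s(\mathscr X)=1$ iff $\mathscr X$ is rank-one; (QZC2) $s(\mathscr I_{M,N})=M$ whenever $N\ge2$; (QZC3) if $\mathscr X\in\mathbb R^{I_1\times I_2\times1\times\cdots\times1}$ then $s(\mathscr X)$ equals the rank of the corresponding $I_1\times I_2$ matrix; (QZC4) $s(\alpha\mathscr X)=s(\mathscr X)$ for $\alpha\ne0$; (QZC5) $s$ is invariant under mode-permutations; (QZC6) $s(\mathscr Y)\le s(\mathscr X)$ whenever $\mathscr Y$ is a subtensor of $\mathscr X$. *)

theory Defs
  imports "Jordan_Normal_Form.DL_Rank" "HOL-Combinatorics.Permutations"
begin

text \<open>A real tensor of order N with dimensions I_1,...,I_N is represented by the pair
  (dims, entries) with dims a list of length N of positive sizes and entries a function on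
  index lists; indices are 0-based and entries outside the index box are 0.\<close>

type_synonym tensor = "nat list \<times> (nat list \<Rightarrow> real)"

definition tdims :: "tensor \<Rightarrow> nat list" where "tdims X = fst X"
definition tent :: "tensor \<Rightarrow> nat list \<Rightarrow> real" where "tent X = snd X"
definition order :: "tensor \<Rightarrow> nat" where "order X = length (tdims X)"

definition valid_index :: "nat list \<Rightarrow> nat list \<Rightarrow> bool" where
  "valid_index d i \<longleftrightarrow> length i = length d \<and> (\<forall>n<length d. i ! n < d ! n)"

definition is_tensor :: "tensor \<Rightarrow> bool" where
  "is_tensor X \<longleftrightarrow> tdims X \<noteq> [] \<and> (\<forall>n<length (tdims X). 0 < tdims X ! n)
     \<and> (\<forall>i. \<not> valid_index (tdims X) i \<longrightarrow> tent X i = 0)"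

definition is_zero :: "tensor \<Rightarrow> bool" where
  "is_zero X \<longleftrightarrow> (\<forall>i. tent X i = 0)"

definition rank_one :: "tensor \<Rightarrow> bool" where
  "rank_one X \<longleftrightarrow> (\<exists>a :: nat \<Rightarrow> nat \<Rightarrow> real.
     (\<forall>n<order X. \<exists>j<tdims X ! n. a n j \<noteq> 0) \<and>
     (\<forall>i. valid_index (tdims X) i \<longrightarrow> tent X i = (\<Prod>n<order X. a n (i ! n))))"

definition ident_tensor :: "nat \<Rightarrow> nat \<Rightarrow> tensor" where
  "ident_tensor M N = (replicate N M,
     (\<lambda>i. if valid_index (replicate N M) i \<and> (\<forall>n<N. i ! n = i ! 0) then 1 else 0))"

definition scale_tensor :: "real \<Rightarrow> tensor \<Rightarrow> tensor" where
  "scale_tensor \<alpha> X = (tdims X, (\<lambda>i. \<alpha> * tent X i))"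

definition subtensor :: "tensor \<Rightarrow> tensor \<Rightarrow> bool" where
  "subtensor Y X \<longleftrightarrow> is_tensor Y \<and> is_tensor X \<and> order Y = order X \<and>
     (\<exists>\<sigma> :: nat \<Rightarrow> nat \<Rightarrow> nat.
        (\<forall>n<order X. strict_mono_on {..<tdims Y ! n} (\<sigma> n) \<and>
                      (\<forall>j<tdims Y ! n. \<sigma> n j < tdims X ! n)) \<and>
        (\<forall>j. valid_index (tdims Y) j \<longrightarrow>
              tent Y j = tent X (map (\<lambda>n. \<sigma> n (j ! n)) [0..<order X])))"

definition mode_perm :: "tensor \<Rightarrow> tensor \<Rightarrow> bool" where
  "mode_perm X Y \<longleftrightarrow> is_tensor X \<and> is_tensor Y \<and> order Y = order X \<and>
     (\<exists>\<pi>. \<pi> permutes {..<order X} \<and>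
        (\<forall>k<order X. tdims Y ! (\<pi> k) = tdims X ! k) \<and>
        (\<forall>i. valid_index (tdims Y) i \<longrightarrow>
              tent Y i = tent X (map (\<lambda>k. i ! (\<pi> k)) [0..<order X])))"

definition sim_gen :: "tensor \<Rightarrow> tensor \<Rightarrow> bool" where
  "sim_gen X Y \<longleftrightarrow> is_tensor X \<and>
     ((\<exists>\<alpha>. \<alpha> \<noteq> 0 \<and> Y = scale_tensor \<alpha> X) \<or> mode_perm X Y)"

definition tsim :: "tensor \<Rightarrow> tensor \<Rightarrow> bool" where
  "tsim = equivclp sim_gen"

definition mode_matrix :: "tensor \<Rightarrow> nat \<Rightarrow> nat \<Rightarrow> real mat" where
  "mode_matrix X p q = mat (tdims X ! p) (tdims X ! q)
     (\<lambda>(a, b). tent X (map (\<lambda>n. if n = p then a else if n = q then b else 0) [0..<order X]))"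

definition mat_rank :: "real mat \<Rightarrow> nat" where
  "mat_rank A = vec_space.rank (dim_row A) A"

definition submatrix_ranks :: "tensor \<Rightarrow> nat set" where
  "submatrix_ranks X =
     {k. \<exists>Z p q. subtensor Z X \<and> p < q \<and> q < order X \<and>
          (\<forall>n<order X. n \<noteq> p \<and> n \<noteq> q \<longrightarrow> tdims Z ! n = 1) \<and>
          k = mat_rank (mode_matrix Z p q)}
   \<union> {k. \<exists>Z p. subtensor Z X \<and> p < order X \<and>
          (\<forall>n<order X. n \<noteq> p \<longrightarrow> tdims Z ! n = 1) \<and>
          k = (if is_zero Z then 0 else 1)}"

definition QZC :: "(tensor \<Rightarrow> nat) \<Rightarrow> bool" where
  "QZC s \<longleftrightarrow>
     (\<forall>X. is_tensor X \<longrightarrow> (s X = 0 \<longleftrightarrow> is_zero X) \<and> (s X = 1 \<longleftrightarrow> rank_one X)) \<and>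
     (\<forall>M N. 1 \<le> M \<longrightarrow> 2 \<le> N \<longrightarrow> s (ident_tensor M N) = M) \<and>
     (\<forall>X. is_tensor X \<longrightarrow> 2 \<le> order X \<longrightarrow> (\<forall>n. 2 \<le> n \<and> n < order X \<longrightarrow> tdims X ! n = 1) \<longrightarrow>
          s X = mat_rank (mode_matrix X 0 1)) \<and>
     (\<forall>X \<alpha>. is_tensor X \<longrightarrow> \<alpha> \<noteq> 0 \<longrightarrow> s (scale_tensor \<alpha> X) = s X) \<and>
     (\<forall>X Y. mode_perm X Y \<longrightarrow> s Y = s X) \<and>
     (\<forall>X Y. subtensor Y X \<longrightarrow> s Y \<le> s X)"

definition mu :: "tensor \<Rightarrow> nat" where
  "mu X = Inf {s X | s. QZC s}"

end

theory Submission
  imports Defs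
begin

text \<open>
  The function r is a QZC rank function that lies below every QZC rank function, so it is their
  minimum \<mu>.

  A QZC rank function s dominates every element of the witness set
  S_0 \<union> S_1 \<union> {2}: it is invariant under \<sim> and monotone on subtensors,
  it takes the value M on the diagonal tensor of side M, and on a submatrix it is the matrix rank,
  because a mode permutation moves the two modes of a submatrix to the front and turns it into a
  tensor of matrix shape.

  Conversely, r inherits (QZC6) because a subtensor relation can be transported along \<sim>, so
  the witness set only grows when passing to a larger tensor, and (QZC2) because no witness of a
  diagonal tensor exceeds its side length. For (QZC3), the submatrices of a
  tensor equivalent to one of matrix shape are, up to scaling and transposition, submatrices of
  that matrix, so their ranks are bounded by its rank; a diagonal subtensor of order at least three
  has side at most 1 there, since \<sim> preserves the set of mode sizes and one of them is 1.
\<close>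

section \<open>Rank factorization of matrices\<close>

context vec_space
begin

lemma rank_mult_le_inner_dim:
  assumes B: "B \<in> carrier_mat n k" and C: "C \<in> carrier_mat k m"
  shows "rank (B * C) \<le> k"
proof -
  have BC: "B * C \<in> carrier_mat n m" using B C by auto
  have cols_BC: "set (cols (B * C)) \<subseteq> span (set (cols B))"
  proof
    fix x assume "x \<in> set (cols (B * C))"
    then obtain j where j: "j < m" "x = col (B * C) j"
      using BC by (metis cols_length cols_nth in_set_conv_nth carrier_matD(2))
    have "x = B *\<^sub>v col C j" using j B C by auto
    moreover have "col C j \<in> carrier_vec (dim_col B)" using B C j by auto
    ultimately have "x \<in> col_space B" using col_space_eq[OF B] B by auto
    then show "x \<in> span (set (cols B))" unfolding col_space_def .
  qed
  have sB: "subspace class_ring (span (set (cols B))) V"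
    using B cols_dim carrier_matD(1) span_is_subspace by (metis module_vec_simps(3))
  have sBC: "subspace class_ring (span (set (cols (B * C)))) V"
    using BC cols_dim carrier_matD(1) span_is_subspace by (metis module_vec_simps(3))
  have "span (set (cols (B * C))) \<subseteq> span (set (cols B))"
    using cols_BC B by (intro span_subsetI) (auto dest: subsetD[OF cols_dim])
  then have "subspace class_ring (span (set (cols (B * C)))) (vs (span (set (cols B))))"
    using nested_subspaces[OF sB sBC] by auto
  then have "rank (B * C) \<le> rank B" unfolding rank_def
    using vectorspace.subspace_dim[OF subspace_is_vs[OF sB]] fin_dim_span_cols[OF B]
      fin_dim_span_cols[OF BC] by auto
  also have "\<dots> \<le> k" using rank_le_nc[OF B] .
  finally show ?thesis .
qed

lemma factor_through_col_space:
  assumes A: "A \<in> carrier_mat n m" and B: "B \<in> carrier_mat n k"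
    and cols_A: "set (cols A) \<subseteq> col_space B"
  shows "\<exists>C \<in> carrier_mat k m. A = B * C"
proof -
  have "\<forall>j<m. \<exists>x \<in> carrier_vec k. col A j = B *\<^sub>v x"
  proof (intro allI impI)
    fix j assume "j < m"
    then have "col A j \<in> col_space B"
      using A cols_A by (metis cols_length cols_nth nth_mem carrier_matD(2) subsetD)
    then show "\<exists>x \<in> carrier_vec k. col A j = B *\<^sub>v x" using col_space_eq[OF B] B by (auto intro: sym)
  qed
  then obtain x where x: "\<And>j. j < m \<Longrightarrow> x j \<in> carrier_vec k \<and> col A j = B *\<^sub>v x j"
    by metis
  define C where "C = mat_of_cols k (map x [0..<m])"
  have C: "C \<in> carrier_mat k m" unfolding C_def using mat_of_cols_carrier(1)[of k "map x [0..<m]"] by simp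
  have "A = B * C"
  proof (rule eq_matI)
    fix i j assume "i < dim_row (B * C)" and "j < dim_col (B * C)"
    then have i: "i < n" and j: "j < m" using B C by auto
    have "col C j = x j" unfolding C_def using j x by (subst col_mat_of_cols) auto
    then have "(B * C) $$ (i, j) = (B *\<^sub>v x j) $ i" using i j B C by auto
    also have "\<dots> = col A j $ i" using x[OF j] by simp
    also have "\<dots> = A $$ (i, j)" using A i j by auto
    finally show "A $$ (i, j) = (B * C) $$ (i, j)" by simp
  qed (use A B C in auto)
  then show ?thesis using C by blast
qed

lemma rank_factorization:
  assumes A: "A \<in> carrier_mat n m"
  shows "\<exists>B C. B \<in> carrier_mat n (rank A) \<and> C \<in> carrier_mat (rank A) m \<and> A = B * C"
proof -
  obtain S where S: "maximal S (\<lambda>T. T \<subseteq> set (cols A) \<and> lin_indpt T)"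
    using maximal_exists[of "\<lambda>T. T \<subseteq> set (cols A) \<and> lin_indpt T" "card (set (cols A))" "{}"]
    by (meson List.finite_set card_mono empty_iff empty_subsetI finite_lin_indpt2 rev_finite_subset)
  have S_cols: "S \<subseteq> set (cols A)" and S_indpt: "lin_indpt S" using S unfolding maximal_def by auto
  have cols_carrier: "set (cols A) \<subseteq> carrier_vec n" using A cols_dim by blast
  then have S_carrier: "S \<subseteq> carrier_vec n" using S_cols by auto
  have cols_in_span: "c \<in> span S" if c: "c \<in> set (cols A)" for c
  proof (cases "c \<in> S")
    case True then show ?thesis using in_own_span[OF S_carrier] by auto
  next
    case False
    have c_carrier: "c \<in> carrier_vec n" using c cols_carrier by auto
    have "\<not> lin_indpt (S \<union> {c})"
    proof
      assume "lin_indpt (S \<union> {c})"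
      then have "S \<union> {c} = S" using S c S_cols unfolding maximal_def by auto
      then show False using False by auto
    qed
    then show ?thesis using lin_dep_iff_in_span[OF S_carrier S_indpt _ False] c_carrier by simp
  qed
  obtain ws where ws: "set ws = S" "distinct ws"
    using finite_distinct_list[OF finite_subset[OF S_cols List.finite_set]] by blast
  define B where "B = mat_of_cols n ws"
  have B: "B \<in> carrier_mat n (rank A)"
    unfolding B_def rank_card_indpt[OF A S] using ws distinct_card by fastforce
  have "col_space B = span S"
    unfolding col_space_def B_def using cols_mat_of_cols ws S_carrier by simp
  then obtain C where "C \<in> carrier_mat (rank A) m" "A = B * C"
    using factor_through_col_space[OF A B] cols_in_span by blast
  then show ?thesis using B by blast
qed

end

lemma mat_rank_mult_le:
  fixes B C :: "real mat"
  assumes "B \<in> carrier_mat n k" and "C \<in> carrier_mat k m"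
  shows "mat_rank (B * C) \<le> k"
  unfolding mat_rank_def using vec_space.rank_mult_le_inner_dim assms by auto

lemma mat_rank_factorization:
  fixes A :: "real mat"
  assumes "A \<in> carrier_mat n m"
  obtains B C where "B \<in> carrier_mat n (mat_rank A)" "C \<in> carrier_mat (mat_rank A) m" "A = B * C"
  unfolding mat_rank_def using vec_space.rank_factorization assms by blast

lemma index_mult_mat_sum:
  fixes B C :: "'a :: comm_semiring_0 mat"
  assumes "B \<in> carrier_mat n k" and "C \<in> carrier_mat k m" and "i < n" and "j < m"
  shows "(B * C) $$ (i, j) = (\<Sum>l<k. B $$ (i, l) * C $$ (l, j))"
  using assms by (simp add: scalar_prod_def lessThan_atLeast0)

lemma mat_rank_reindex_le:
  fixes A :: "real mat"
  assumes A: "A \<in> carrier_mat n m"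
    and f: "\<And>x. x < r \<Longrightarrow> f x < n" and g: "\<And>y. y < c \<Longrightarrow> g y < m"
  shows "mat_rank (mat r c (\<lambda>(x, y). A $$ (f x, g y))) \<le> mat_rank A"
proof -
  obtain B C where B: "B \<in> carrier_mat n (mat_rank A)" and C: "C \<in> carrier_mat (mat_rank A) m"
    and A_BC: "A = B * C" using mat_rank_factorization[OF A] .
  define B' where "B' = mat r (mat_rank A) (\<lambda>(x, l). B $$ (f x, l))"
  define C' where "C' = mat (mat_rank A) c (\<lambda>(l, y). C $$ (l, g y))"
  have B': "B' \<in> carrier_mat r (mat_rank A)" and C': "C' \<in> carrier_mat (mat_rank A) c"
    unfolding B'_def C'_def by auto
  have "mat r c (\<lambda>(x, y). A $$ (f x, g y)) = B' * C'"
  proof (rule eq_matI)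
    fix i j assume "i < dim_row (B' * C')" and "j < dim_col (B' * C')"
    then have i: "i < r" and j: "j < c" using B' C' by auto
    have "(B' * C') $$ (i, j) = (\<Sum>l<mat_rank A. B $$ (f i, l) * C $$ (l, g j))"
      using index_mult_mat_sum[OF B' C' i j] i j by (simp add: B'_def C'_def)
    also have "\<dots> = A $$ (f i, g j)"
      using index_mult_mat_sum[OF B C f[OF i] g[OF j]] by (simp add: A_BC)
    finally show "mat r c (\<lambda>(x, y). A $$ (f x, g y)) $$ (i, j) = (B' * C') $$ (i, j)"
      using i j by simp
  qed (use B' C' in auto)
  then show ?thesis using mat_rank_mult_le[OF B' C'] by simp
qed

lemma mat_rank_transpose_le:
  fixes A :: "real mat"
  shows "mat_rank (transpose_mat A) \<le> mat_rank A"
proof -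
  obtain B C where B: "B \<in> carrier_mat (dim_row A) (mat_rank A)"
    and C: "C \<in> carrier_mat (mat_rank A) (dim_col A)" and "A = B * C"
    using mat_rank_factorization[of A] by blast
  then have "transpose_mat A = transpose_mat C * transpose_mat B" using transpose_mult by blast
  then show ?thesis using mat_rank_mult_le[of "transpose_mat C" _ "mat_rank A"] B C by auto
qed

lemma mat_rank_transpose [simp]:
  fixes A :: "real mat"
  shows "mat_rank (transpose_mat A) = mat_rank A"
  using mat_rank_transpose_le[of A] mat_rank_transpose_le[of "transpose_mat A"] by simp

lemma mat_rank_le_dim_col:
  fixes A :: "real mat"
  shows "mat_rank A \<le> dim_col A"
  unfolding mat_rank_def by (rule vec_space.rank_le_nc) auto

lemma mat_rank_le_dim_row:
  fixes A :: "real mat"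
  shows "mat_rank A \<le> dim_row A"
  using mat_rank_le_dim_col[of "transpose_mat A"] by simp

lemma mat_rank_smult_le:
  fixes A :: "real mat"
  shows "mat_rank (c \<cdot>\<^sub>m A) \<le> mat_rank A"
proof -
  obtain B C where B: "B \<in> carrier_mat (dim_row A) (mat_rank A)"
    and C: "C \<in> carrier_mat (mat_rank A) (dim_col A)" and "A = B * C"
    using mat_rank_factorization[of A] by blast
  then have "c \<cdot>\<^sub>m A = (c \<cdot>\<^sub>m B) * C" by (simp add: mult_smult_assoc_mat)
  then show ?thesis
    using mat_rank_mult_le[of "c \<cdot>\<^sub>m B" "dim_row A" "mat_rank A" C "dim_col A"] B C by auto
qed

lemma mat_rank_smult:
  fixes A :: "real mat"
  assumes "c \<noteq> 0"
  shows "mat_rank (c \<cdot>\<^sub>m A) = mat_rank A"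
proof -
  have "(1 / c) \<cdot>\<^sub>m (c \<cdot>\<^sub>m A) = A" using assms by (intro eq_matI) auto
  then show ?thesis using mat_rank_smult_le[of c A] mat_rank_smult_le[of "1 / c" "c \<cdot>\<^sub>m A"] by simp
qed

lemma mat_rank_one_mat [simp]: "mat_rank (1\<^sub>m n :: real mat) = n"
  unfolding mat_rank_def using vec_space.det_rank_iff[of "1\<^sub>m n :: real mat" n] by simp

lemma mat_rank_0_entries:
  fixes A :: "real mat"
  assumes "mat_rank A = 0" and "i < dim_row A" and "j < dim_col A"
  shows "A $$ (i, j) = 0"
proof -
  obtain B C where B: "B \<in> carrier_mat (dim_row A) (mat_rank A)"
    and C: "C \<in> carrier_mat (mat_rank A) (dim_col A)" and A_BC: "A = B * C"
    using mat_rank_factorization[of A] by blast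
  have "A $$ (i, j) = (\<Sum>l<mat_rank A. B $$ (i, l) * C $$ (l, j))"
    using index_mult_mat_sum[OF B C assms(2,3)] A_BC by simp
  then show ?thesis using assms(1) by simp
qed

lemma mat_rank_le_1_iff:
  fixes A :: "real mat"
  shows "mat_rank A \<le> 1 \<longleftrightarrow>
    (\<exists>f g. \<forall>i<dim_row A. \<forall>j<dim_col A. A $$ (i, j) = f i * g j)"
proof
  assume rank: "mat_rank A \<le> 1"
  obtain B C where B: "B \<in> carrier_mat (dim_row A) (mat_rank A)"
    and C: "C \<in> carrier_mat (mat_rank A) (dim_col A)" and A_BC: "A = B * C"
    using mat_rank_factorization[of A] by blast
  show "\<exists>f g. \<forall>i<dim_row A. \<forall>j<dim_col A. A $$ (i, j) = f i * g j"
  proof (cases "mat_rank A")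
    case 0
    then show ?thesis using mat_rank_0_entries by (intro exI[of _ "\<lambda>_. 0"]) auto
  next
    case (Suc k)
    then have rank_1: "mat_rank A = 1" using rank by simp
    show ?thesis
    proof (intro exI allI impI)
      fix i j assume "i < dim_row A" and "j < dim_col A"
      then show "A $$ (i, j) = B $$ (i, 0) * C $$ (0, j)"
        using index_mult_mat_sum[OF B C] rank_1 unfolding A_BC[symmetric] by simp
    qed
  qed
next
  assume "\<exists>f g. \<forall>i<dim_row A. \<forall>j<dim_col A. A $$ (i, j) = f i * g j"
  then obtain f g where "\<forall>i<dim_row A. \<forall>j<dim_col A. A $$ (i, j) = f i * g j" by blast
  then show "mat_rank A \<le> 1"
    unfolding mat_rank_def by (intro vec_space.rank_le_1_product_entries[OF carrier_mat_triv]) auto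
qed

section \<open>Tensors, scaling and permutation of modes\<close>

lemma tdims_pair [simp]: "tdims (d, f) = d" and tent_pair [simp]: "tent (d, f) = f"
  by (simp_all add: tdims_def tent_def)

lemma tensor_eqI: "tdims X = tdims Y \<Longrightarrow> tent X = tent Y \<Longrightarrow> X = Y"
  by (simp add: tdims_def tent_def prod_eq_iff)

lemma length_tdims: "length (tdims X) = order X"
  by (simp add: order_def)

lemma order_pos: "is_tensor X \<Longrightarrow> 0 < order X"
  by (simp add: is_tensor_def order_def)

lemma tdims_pos: "is_tensor X \<Longrightarrow> n < order X \<Longrightarrow> 0 < tdims X ! n"
  by (simp add: is_tensor_def order_def)

lemma tent_invalid: "is_tensor X \<Longrightarrow> \<not> valid_index (tdims X) i \<Longrightarrow> tent X i = 0"
  by (simp add: is_tensor_def)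

lemma map_nth_valid_index: "valid_index (tdims X) i \<Longrightarrow> map (\<lambda>n. i ! n) [0..<order X] = i"
  unfolding valid_index_def order_def by (intro nth_equalityI) auto

lemma scale_tensor_simps [simp]:
  "tdims (scale_tensor c X) = tdims X" "tent (scale_tensor c X) i = c * tent X i"
  "order (scale_tensor c X) = order X"
  by (simp_all add: scale_tensor_def order_def)

lemma is_tensor_scale_tensor: "is_tensor X \<Longrightarrow> is_tensor (scale_tensor c X)"
  by (simp add: is_tensor_def)

lemma scale_tensor_inverse: "c \<noteq> 0 \<Longrightarrow> scale_tensor (1 / c) (scale_tensor c X) = X"
  by (rule tensor_eqI) auto

lemma zero_or_rank_one_if_product:
  assumes X: "is_tensor X"
    and product: "\<And>i. valid_index (tdims X) i \<Longrightarrow> tent X i = (\<Prod>n<order X. a n (i ! n))"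
  shows "is_zero X \<or> rank_one X"
proof (cases "\<forall>n<order X. \<exists>j<tdims X ! n. a n j \<noteq> 0")
  case True
  then show ?thesis unfolding rank_one_def using product by blast
next
  case False
  then obtain n where n: "n < order X" and a_n: "\<forall>j<tdims X ! n. a n j = 0" by auto
  have "tent X i = 0" for i
  proof (cases "valid_index (tdims X) i")
    case True
    then have "a n (i ! n) = 0" using n a_n unfolding valid_index_def order_def by auto
    then show ?thesis using product[OF True] n by (metis finite_lessThan lessThan_iff prod_zero_iff)
  qed (use tent_invalid[OF X] in auto)
  then show ?thesis unfolding is_zero_def by simp
qed

lemma order_1_zero_or_rank_one:
  assumes X: "is_tensor X" and order: "order X = 1"
  shows "is_zero X \<or> rank_one X"
proof (rule zero_or_rank_one_if_product[OF X])
  fix i assume "valid_index (tdims X) i"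
  then have "i = [i ! 0]" using order unfolding valid_index_def order_def by (cases i) auto
  then show "tent X i = (\<Prod>n<order X. tent X [i ! n])" using order by simp
qed

text \<open>Mode k of X becomes mode \<pi> k. The inverse is written \<open>Hilbert_Choice.inv\<close> because
  the group-inverse syntax of HOL-Algebra captures a plain \<open>inv\<close>.\<close>

definition permute_modes :: "(nat \<Rightarrow> nat) \<Rightarrow> tensor \<Rightarrow> tensor" where
  "permute_modes \<pi> X =
     (let d = permute_list (Hilbert_Choice.inv \<pi>) (tdims X)
      in (d, \<lambda>i. if valid_index d i then tent X (map (\<lambda>k. i ! \<pi> k) [0..<order X]) else 0))"

lemma order_permute_modes [simp]: "order (permute_modes \<pi> X) = order X"
  by (simp add: permute_modes_def Let_def order_def)

lemma tdims_permute_modes: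
  "m < order X \<Longrightarrow> tdims (permute_modes \<pi> X) ! m = tdims X ! Hilbert_Choice.inv \<pi> m"
  by (simp add: permute_modes_def Let_def permute_list_def length_tdims)

lemma tdims_permute_modes_apply:
  assumes "\<pi> permutes {..<order X}" and "k < order X"
  shows "tdims (permute_modes \<pi> X) ! \<pi> k = tdims X ! k"
  using assms permutes_in_image[OF assms(1)]
  by (simp add: tdims_permute_modes permutes_inverses(2)[OF assms(1)])

lemma tent_permute_modes:
  "valid_index (tdims (permute_modes \<pi> X)) i \<Longrightarrow>
     tent (permute_modes \<pi> X) i = tent X (map (\<lambda>k. i ! \<pi> k) [0..<order X])"
  by (simp add: permute_modes_def Let_def)

lemma set_tdims_permute_modes:
  "\<pi> permutes {..<order X} \<Longrightarrow> set (tdims (permute_modes \<pi> X)) = set (tdims X)"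
  by (simp add: permute_modes_def Let_def permutes_inv length_tdims)

lemma valid_index_permute_modes:
  assumes "\<pi> permutes {..<order X}"
  shows "valid_index (tdims (permute_modes \<pi> X)) i \<longleftrightarrow>
    length i = order X \<and> (\<forall>k<order X. i ! \<pi> k < tdims X ! k)"
proof -
  have "(\<forall>m<order X. i ! m < tdims X ! Hilbert_Choice.inv \<pi> m) \<longleftrightarrow> (\<forall>k<order X. i ! \<pi> k < tdims X ! k)"
    using permutes_in_image[OF assms] permutes_inverses[OF assms] by (metis lessThan_iff)
  then show ?thesis
    unfolding valid_index_def by (simp add: length_tdims tdims_permute_modes)
qed

lemma tdims_permute_modes_eq_1:
  assumes \<pi>: "\<pi> permutes {..<order Z}"
    and flat: "\<forall>n<order Z. n \<noteq> p \<and> n \<noteq> q \<longrightarrow> tdims Z ! n = 1"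
  shows "\<forall>n<order Z. n \<noteq> \<pi> p \<and> n \<noteq> \<pi> q \<longrightarrow> tdims (permute_modes \<pi> Z) ! n = 1"
proof (intro allI impI)
  fix n assume n: "n < order Z" and "n \<noteq> \<pi> p \<and> n \<noteq> \<pi> q"
  then have "Hilbert_Choice.inv \<pi> n \<noteq> p" and "Hilbert_Choice.inv \<pi> n \<noteq> q"
    using permutes_inverses(1)[OF \<pi>] by metis+
  moreover have "Hilbert_Choice.inv \<pi> n < order Z"
    using permutes_in_image[OF permutes_inv[OF \<pi>]] n by simp
  ultimately show "tdims (permute_modes \<pi> Z) ! n = 1" using flat n by (simp add: tdims_permute_modes)
qed

lemma is_tensor_permute_modes:
  assumes X: "is_tensor X" and \<pi>: "\<pi> permutes {..<order X}"
  shows "is_tensor (permute_modes \<pi> X)"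
proof -
  have "0 < tdims X ! Hilbert_Choice.inv \<pi> m" if "m < order X" for m
    using tdims_pos[OF X] that permutes_in_image[OF permutes_inv[OF \<pi>]] by simp
  then show ?thesis
    using order_pos[OF X] unfolding is_tensor_def
    by (auto simp: permute_modes_def Let_def permute_list_def order_def)
qed

lemma mode_perm_permute_modes:
  assumes X: "is_tensor X" and \<pi>: "\<pi> permutes {..<order X}"
  shows "mode_perm X (permute_modes \<pi> X)"
  unfolding mode_perm_def using is_tensor_permute_modes[OF X \<pi>] X \<pi>
  by (auto simp: tdims_permute_modes_apply[OF \<pi>] tent_permute_modes)

lemma mode_perm_imp_permute_modes:
  assumes "mode_perm X Y"
  obtains \<pi> where "\<pi> permutes {..<order X}" and "Y = permute_modes \<pi> X"
proof -
  obtain \<pi> where Y: "is_tensor Y" and order: "order Y = order X"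
    and \<pi>: "\<pi> permutes {..<order X}"
    and dims: "\<forall>k<order X. tdims Y ! \<pi> k = tdims X ! k"
    and entries: "\<forall>i. valid_index (tdims Y) i \<longrightarrow> tent Y i = tent X (map (\<lambda>k. i ! \<pi> k) [0..<order X])"
    using assms unfolding mode_perm_def by blast
  have "tdims Y ! m = tdims (permute_modes \<pi> X) ! m" if "m < order X" for m
  proof -
    have "Hilbert_Choice.inv \<pi> m < order X"
      using that permutes_in_image[OF permutes_inv[OF \<pi>]] by simp
    then have "tdims Y ! \<pi> (Hilbert_Choice.inv \<pi> m) = tdims X ! Hilbert_Choice.inv \<pi> m"
      using dims by blast
    then show ?thesis using that by (simp add: tdims_permute_modes permutes_inverses(1)[OF \<pi>])
  qed
  then have same_dims: "tdims Y = tdims (permute_modes \<pi> X)"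
    using order by (intro nth_equalityI) (auto simp: length_tdims)
  have "Y = permute_modes \<pi> X"
  proof (rule tensor_eqI[OF same_dims], rule ext)
    fix i show "tent Y i = tent (permute_modes \<pi> X) i"
      using entries tent_invalid[OF Y] by (simp add: same_dims permute_modes_def Let_def)
  qed
  then show ?thesis using \<pi> that by blast
qed

lemma permute_modes_inv:
  assumes X: "is_tensor X" and \<pi>: "\<pi> permutes {..<order X}"
  shows "permute_modes (Hilbert_Choice.inv \<pi>) (permute_modes \<pi> X) = X"
proof -
  let ?Y = "permute_modes \<pi> X"
  let ?Z = "permute_modes (Hilbert_Choice.inv \<pi>) ?Y"
  have inv: "Hilbert_Choice.inv \<pi> permutes {..<order ?Y}" using permutes_inv[OF \<pi>] by simp
  have same_dims: "tdims ?Z = tdims X"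
    by (rule nth_equalityI)
      (auto simp: length_tdims tdims_permute_modes permutes_in_image[OF \<pi>] permutes_inv_inv[OF \<pi>]
        tdims_permute_modes_apply[OF \<pi>])
  have "tent ?Z i = tent X i" for i
  proof (cases "valid_index (tdims X) i")
    case True
    let ?j = "map (\<lambda>k. i ! Hilbert_Choice.inv \<pi> k) [0..<order X]"
    have j_nth: "?j ! \<pi> k = i ! k" if "k < order X" for k
      using that permutes_in_image[OF \<pi>] permutes_inverses(2)[OF \<pi>] by simp
    have j_valid: "valid_index (tdims ?Y) ?j"
      unfolding valid_index_permute_modes[OF \<pi>] using True j_nth by (simp add: valid_index_def length_tdims)
    have j_perm: "map (\<lambda>k. ?j ! \<pi> k) [0..<order X] = i"
      by (rule nth_equalityI) (use True j_nth in \<open>auto simp: valid_index_def length_tdims\<close>)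
    have "tent ?Z i = tent ?Y ?j" using True by (simp add: same_dims tent_permute_modes)
    also have "\<dots> = tent X i" using tent_permute_modes[OF j_valid] unfolding j_perm .
    finally show ?thesis .
  next
    case False
    have "is_tensor ?Z" using is_tensor_permute_modes[OF is_tensor_permute_modes[OF X \<pi>] inv] .
    then show ?thesis using False tent_invalid[OF X] tent_invalid[of ?Z] by (simp add: same_dims)
  qed
  then show ?thesis using same_dims by (intro tensor_eqI) auto
qed

definition subtensor_via :: "(nat \<Rightarrow> nat \<Rightarrow> nat) \<Rightarrow> tensor \<Rightarrow> tensor \<Rightarrow> bool" where
  "subtensor_via \<sigma> Y X \<longleftrightarrow>
     (\<forall>n<order X. strict_mono_on {..<tdims Y ! n} (\<sigma> n) \<and> (\<forall>j<tdims Y ! n. \<sigma> n j < tdims X ! n)) \<and>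
     (\<forall>j. valid_index (tdims Y) j \<longrightarrow> tent Y j = tent X (map (\<lambda>n. \<sigma> n (j ! n)) [0..<order X]))"

lemma subtensor_iff_via:
  "subtensor Y X \<longleftrightarrow> is_tensor Y \<and> is_tensor X \<and> order Y = order X \<and> (\<exists>\<sigma>. subtensor_via \<sigma> Y X)"
  unfolding subtensor_def subtensor_via_def by blast

lemma subtensor_tensors: "subtensor Y X \<Longrightarrow> is_tensor Y \<and> is_tensor X \<and> order Y = order X"
  by (simp add: subtensor_def)

lemma subtensor_via_valid_index:
  assumes "subtensor_via \<sigma> Y X" and "order Y = order X" and "valid_index (tdims Y) j"
  shows "valid_index (tdims X) (map (\<lambda>n. \<sigma> n (j ! n)) [0..<order X])"
  using assms unfolding subtensor_via_def valid_index_def by (auto simp: length_tdims)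

lemma subtensor_refl: "is_tensor X \<Longrightarrow> subtensor X X"
  unfolding subtensor_iff_via subtensor_via_def
  by (intro conjI exI[of _ "\<lambda>n j. j"]) (auto simp: strict_mono_on_def map_nth_valid_index)

lemma subtensor_tdims_le:
  assumes "subtensor Z Y" and "n < order Y"
  shows "tdims Z ! n \<le> tdims Y ! n"
proof -
  obtain \<sigma> where "subtensor_via \<sigma> Z Y" using assms(1) unfolding subtensor_iff_via by blast
  then have mono: "strict_mono_on {..<tdims Z ! n} (\<sigma> n)" and bound: "\<forall>j<tdims Z ! n. \<sigma> n j < tdims Y ! n"
    using assms(2) unfolding subtensor_via_def by auto
  have "inj_on (\<sigma> n) {..<tdims Z ! n}" using mono by (rule strict_mono_on_imp_inj_on)
  moreover have "\<sigma> n ` {..<tdims Z ! n} \<subseteq> {..<tdims Y ! n}" using bound by auto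
  ultimately have "card {..<tdims Z ! n} \<le> card {..<tdims Y ! n}" by (intro card_inj_on_le) auto
  then show ?thesis by simp
qed

lemma subtensor_trans:
  assumes ZY: "subtensor Z Y" and YX: "subtensor Y X"
  shows "subtensor Z X"
proof -
  obtain \<sigma> where \<sigma>: "subtensor_via \<sigma> Z Y" and order_Z: "order Z = order Y" and Z: "is_tensor Z"
    using ZY unfolding subtensor_iff_via by blast
  obtain \<tau> where \<tau>: "subtensor_via \<tau> Y X" and order_Y: "order Y = order X" and X: "is_tensor X"
    using YX unfolding subtensor_iff_via by blast
  have "subtensor_via (\<lambda>n j. \<tau> n (\<sigma> n j)) Z X"
    unfolding subtensor_via_def
  proof (intro conjI allI impI)
    fix n assume "n < order X"
    then show "strict_mono_on {..<tdims Z ! n} (\<lambda>j. \<tau> n (\<sigma> n j))"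
      using \<sigma> \<tau> order_Y unfolding subtensor_via_def strict_mono_on_def by (metis lessThan_iff)
  next
    fix n j assume "n < order X" and "j < tdims Z ! n"
    then show "\<tau> n (\<sigma> n j) < tdims X ! n"
      using \<sigma> \<tau> order_Y unfolding subtensor_via_def by auto
  next
    fix j assume j: "valid_index (tdims Z) j"
    let ?j = "map (\<lambda>n. \<sigma> n (j ! n)) [0..<order Y]"
    have "tent Z j = tent Y ?j" using \<sigma> j unfolding subtensor_via_def by auto
    also have "\<dots> = tent X (map (\<lambda>n. \<tau> n (?j ! n)) [0..<order X])"
      using \<tau> subtensor_via_valid_index[OF \<sigma> order_Z j] unfolding subtensor_via_def by auto
    also have "map (\<lambda>n. \<tau> n (?j ! n)) [0..<order X] = map (\<lambda>n. \<tau> n (\<sigma> n (j ! n))) [0..<order X]"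
      using order_Y by simp
    finally show "tent Z j = tent X (map (\<lambda>n. \<tau> n (\<sigma> n (j ! n))) [0..<order X])" .
  qed
  then show ?thesis using Z X order_Z order_Y unfolding subtensor_iff_via by auto
qed

lemma subtensor_zero:
  assumes "subtensor Z Y" and "is_zero Y"
  shows "is_zero Z"
  using assms unfolding subtensor_iff_via subtensor_via_def is_zero_def
  by (metis tent_invalid)

lemma subtensor_rank_one:
  assumes ZY: "subtensor Z Y" and "rank_one Y"
  shows "is_zero Z \<or> rank_one Z"
proof -
  obtain \<sigma> where \<sigma>: "subtensor_via \<sigma> Z Y" and Z: "is_tensor Z" and order: "order Z = order Y"
    using ZY unfolding subtensor_iff_via by blast
  obtain a where a: "\<forall>i. valid_index (tdims Y) i \<longrightarrow> tent Y i = (\<Prod>n<order Y. a n (i ! n))"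
    using \<open>rank_one Y\<close> unfolding rank_one_def by blast
  show ?thesis
  proof (rule zero_or_rank_one_if_product[OF Z])
    fix j assume j: "valid_index (tdims Z) j"
    have "tent Z j = tent Y (map (\<lambda>n. \<sigma> n (j ! n)) [0..<order Y])"
      using \<sigma> j unfolding subtensor_via_def by auto
    also have "\<dots> = (\<Prod>n<order Z. a n (\<sigma> n (j ! n)))"
      using a subtensor_via_valid_index[OF \<sigma> order j] order by simp
    finally show "tent Z j = (\<Prod>n<order Z. a n (\<sigma> n (j ! n)))" .
  qed
qed

lemma subtensor_scale_tensor:
  assumes "subtensor Z Y"
  shows "subtensor (scale_tensor c Z) (scale_tensor c Y)"
  using assms is_tensor_scale_tensor unfolding subtensor_iff_via subtensor_via_def by auto

lemma subtensor_permute_modes: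
  assumes ZY: "subtensor Z Y" and \<pi>: "\<pi> permutes {..<order Y}"
  shows "subtensor (permute_modes \<pi> Z) (permute_modes \<pi> Y)"
proof -
  obtain \<sigma> where \<sigma>: "subtensor_via \<sigma> Z Y" and Z: "is_tensor Z" and Y: "is_tensor Y"
    and order: "order Z = order Y"
    using ZY unfolding subtensor_iff_via by blast
  have \<pi>_Z: "\<pi> permutes {..<order Z}" using \<pi> order by simp
  have inv_range: "Hilbert_Choice.inv \<pi> m < order Y" if "m < order Y" for m
    using that permutes_in_image[OF permutes_inv[OF \<pi>]] by simp
  have "subtensor_via (\<lambda>m. \<sigma> (Hilbert_Choice.inv \<pi> m)) (permute_modes \<pi> Z) (permute_modes \<pi> Y)"
    unfolding subtensor_via_def
  proof (intro conjI allI impI)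
    fix m assume "m < order (permute_modes \<pi> Y)"
    then show "strict_mono_on {..<tdims (permute_modes \<pi> Z) ! m} (\<sigma> (Hilbert_Choice.inv \<pi> m))"
      using \<sigma> inv_range order unfolding subtensor_via_def by (auto simp: tdims_permute_modes)
  next
    fix m j assume "m < order (permute_modes \<pi> Y)" and "j < tdims (permute_modes \<pi> Z) ! m"
    then show "\<sigma> (Hilbert_Choice.inv \<pi> m) j < tdims (permute_modes \<pi> Y) ! m"
      using \<sigma> inv_range order unfolding subtensor_via_def by (auto simp: tdims_permute_modes)
  next
    fix j assume j: "valid_index (tdims (permute_modes \<pi> Z)) j"
    let ?j = "map (\<lambda>m. \<sigma> (Hilbert_Choice.inv \<pi> m) (j ! m)) [0..<order (permute_modes \<pi> Y)]"
    have j_\<pi>: "valid_index (tdims Z) (map (\<lambda>k. j ! \<pi> k) [0..<order Z])"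
      using j unfolding valid_index_permute_modes[OF \<pi>_Z] by (simp add: valid_index_def length_tdims)
    have j_perm: "map (\<lambda>k. ?j ! \<pi> k) [0..<order Y] = map (\<lambda>n. \<sigma> n (j ! \<pi> n)) [0..<order Y]"
      using permutes_in_image[OF \<pi>] permutes_inverses(2)[OF \<pi>] by simp
    have j_valid: "valid_index (tdims (permute_modes \<pi> Y)) ?j"
      using subtensor_via_valid_index[OF \<sigma> order j_\<pi>] order j_perm
      unfolding valid_index_permute_modes[OF \<pi>] by (simp add: valid_index_def length_tdims)
    have "tent (permute_modes \<pi> Z) j = tent Z (map (\<lambda>k. j ! \<pi> k) [0..<order Z])"
      by (rule tent_permute_modes[OF j])
    also have "\<dots> = tent Y (map (\<lambda>n. \<sigma> n (map (\<lambda>k. j ! \<pi> k) [0..<order Z] ! n)) [0..<order Y])"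
      using \<sigma> j_\<pi> order unfolding subtensor_via_def by blast
    also have "map (\<lambda>n. \<sigma> n (map (\<lambda>k. j ! \<pi> k) [0..<order Z] ! n)) [0..<order Y]
        = map (\<lambda>k. ?j ! \<pi> k) [0..<order Y]"
      unfolding j_perm using order by simp
    also have "tent Y \<dots> = tent (permute_modes \<pi> Y) ?j"
      by (rule tent_permute_modes[symmetric, OF j_valid])
    finally show "tent (permute_modes \<pi> Z) j = tent (permute_modes \<pi> Y) ?j" .
  qed
  then show ?thesis
    using is_tensor_permute_modes[OF Z \<pi>_Z] is_tensor_permute_modes[OF Y \<pi>] order
    unfolding subtensor_iff_via by auto
qed

section \<open>Equivalent tensors\<close>

lemma sim_gen_cases:
  assumes "sim_gen A B"
  obtains (scale) c where "c \<noteq> 0" and "B = scale_tensor c A"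
  | (permute) \<pi> where "\<pi> permutes {..<order A}" and "B = permute_modes \<pi> A"
  using assms unfolding sim_gen_def by (metis mode_perm_imp_permute_modes)

lemma sim_gen_tensors: "sim_gen A B \<Longrightarrow> is_tensor A \<and> is_tensor B"
  unfolding sim_gen_def mode_perm_def by (auto intro: is_tensor_scale_tensor)

lemma sim_gen_scale_tensor: "is_tensor A \<Longrightarrow> c \<noteq> 0 \<Longrightarrow> sim_gen A (scale_tensor c A)"
  unfolding sim_gen_def by blast

lemma sim_gen_permute_modes: "is_tensor A \<Longrightarrow> \<pi> permutes {..<order A} \<Longrightarrow> sim_gen A (permute_modes \<pi> A)"
  unfolding sim_gen_def using mode_perm_permute_modes by blast

lemma sim_gen_sym:
  assumes "sim_gen A B"
  shows "sim_gen B A"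
proof -
  have A: "is_tensor A" and B: "is_tensor B" using sim_gen_tensors[OF assms] by auto
  from assms show ?thesis
  proof (cases rule: sim_gen_cases)
    case (scale c)
    then show ?thesis
      using sim_gen_scale_tensor[OF B, of "1 / c"] scale_tensor_inverse[of c A] by simp
  next
    case (permute \<pi>)
    then have "Hilbert_Choice.inv \<pi> permutes {..<order B}" by (simp add: permutes_inv)
    then show ?thesis
      using sim_gen_permute_modes[OF B] permute_modes_inv[OF A] permute by metis
  qed
qed

lemma tsim_refl: "tsim X X"
  unfolding tsim_def by simp

lemma tsim_sym: "tsim X Y \<Longrightarrow> tsim Y X"
  unfolding tsim_def by (rule equivclp_sym)

lemma sim_gen_imp_tsim: "sim_gen X Y \<Longrightarrow> tsim X Y"
  unfolding tsim_def by (rule r_into_equivclp)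

lemma tsim_sim_gen_trans: "tsim X Y \<Longrightarrow> sim_gen Y Z \<Longrightarrow> tsim X Z"
  unfolding tsim_def by (rule equivclp_into_equivclp) auto

lemma tsim_induct [consumes 2, case_names base step]:
  assumes "tsim X Y" and "is_tensor X" and "P X"
    and "\<And>A B. is_tensor A \<Longrightarrow> P A \<Longrightarrow> sim_gen A B \<Longrightarrow> P B"
  shows "P Y"
proof -
  have "equivclp sim_gen X Y" using assms(1) unfolding tsim_def .
  then have "is_tensor Y \<and> P Y"
  proof (induction rule: equivclp_induct)
    case base
    then show ?case using assms(2,3) by simp
  next
    case (step A B)
    then have "sim_gen A B" using sim_gen_sym by blast
    then show ?case using assms(4) step(3) sim_gen_tensors by blast
  qed
  then show ?thesis ..
qed

lemma tsim_tensor: "tsim X Y \<Longrightarrow> is_tensor X \<Longrightarrow> is_tensor Y"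
  using tsim_induct[of X Y is_tensor] sim_gen_tensors by blast

lemma sim_gen_order: "sim_gen A B \<Longrightarrow> order B = order A"
  unfolding sim_gen_def mode_perm_def by auto

lemma sim_gen_set_tdims:
  assumes "sim_gen A B"
  shows "set (tdims B) = set (tdims A)"
  using assms by (cases rule: sim_gen_cases) (simp_all add: set_tdims_permute_modes)

lemma tsim_order: "tsim X Y \<Longrightarrow> is_tensor X \<Longrightarrow> order Y = order X"
  by (induction rule: tsim_induct) (auto dest: sim_gen_order)

lemma tsim_set_tdims: "tsim X Y \<Longrightarrow> is_tensor X \<Longrightarrow> set (tdims Y) = set (tdims X)"
  by (induction rule: tsim_induct) (auto dest: sim_gen_set_tdims)

lemma tsim_lift_subtensor:
  assumes "tsim Y Y'" and "subtensor Y X"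
  shows "\<exists>X'. tsim X X' \<and> subtensor Y' X'"
  using assms(1) conjunct1[OF subtensor_tensors[OF assms(2)]]
proof (induction rule: tsim_induct)
  case base
  then show ?case using assms(2) tsim_refl by blast
next
  case (step A B)
  then obtain X' where X': "tsim X X'" and A: "subtensor A X'" by blast
  then have X'_tensor: "is_tensor X'" and order: "order A = order X'"
    using subtensor_tensors by auto
  from \<open>sim_gen A B\<close> show ?case
  proof (cases rule: sim_gen_cases)
    case (scale c)
    then show ?thesis
      using tsim_sim_gen_trans[OF X' sim_gen_scale_tensor[OF X'_tensor]] subtensor_scale_tensor[OF A]
      by blast
  next
    case (permute \<pi>)
    then have "\<pi> permutes {..<order X'}" using order by simp
    then show ?thesis
      using tsim_sim_gen_trans[OF X' sim_gen_permute_modes[OF X'_tensor]] subtensor_permute_modes[OF A]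
        permute(2) by blast
  qed
qed

lemma ident_tensor_simps:
  "tdims (ident_tensor M N) = replicate N M" "order (ident_tensor M N) = N"
  "tent (ident_tensor M N) i =
     (if valid_index (replicate N M) i \<and> (\<forall>n<N. i ! n = i ! 0) then 1 else 0)"
  by (simp_all add: ident_tensor_def order_def)

lemma is_tensor_ident_tensor: "1 \<le> M \<Longrightarrow> 1 \<le> N \<Longrightarrow> is_tensor (ident_tensor M N)"
  unfolding is_tensor_def ident_tensor_simps by auto

lemma is_tensor_ident_tensorD: "is_tensor (ident_tensor M N) \<Longrightarrow> 1 \<le> M"
  unfolding is_tensor_def ident_tensor_simps by (cases N) auto

lemma ident_tensor_not_zero: "1 \<le> M \<Longrightarrow> \<not> is_zero (ident_tensor M N)"
proof -
  assume "1 \<le> M"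
  then have "tent (ident_tensor M N) (replicate N 0) = 1"
    unfolding ident_tensor_simps by (auto simp: valid_index_def)
  then show ?thesis unfolding is_zero_def by (metis zero_neq_one)
qed

lemma rank_one_ident_tensor_1: "rank_one (ident_tensor 1 N)"
  unfolding rank_one_def
proof (intro exI[of _ "\<lambda>n j. 1"] conjI allI impI)
  fix i assume i: "valid_index (tdims (ident_tensor 1 N)) i"
  then have "\<forall>n<N. i ! n = 0" unfolding ident_tensor_simps valid_index_def by auto
  then show "tent (ident_tensor 1 N) i = (\<Prod>n<order (ident_tensor 1 N). 1)"
    using i unfolding ident_tensor_simps by simp
qed (auto simp: ident_tensor_simps)

lemma prod_lessThan_split_first_two:
  fixes h :: "nat \<Rightarrow> 'a :: comm_monoid_mult"
  assumes "2 \<le> N"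
  shows "(\<Prod>n<N. h n) = h 0 * (h 1 * (\<Prod>n<N - 2. h (Suc (Suc n))))"
proof -
  obtain K where "N = Suc (Suc K)" using assms by (metis add_2_eq_Suc le_Suc_ex)
  then show ?thesis by (simp only: prod.lessThan_Suc_shift) simp
qed

text \<open>A rank-one tensor with nonzero entries at (0,0,...) and (1,1,...) is also nonzero at
  (0,1,0,...), whereas the diagonal tensor vanishes there.\<close>

lemma ident_tensor_not_rank_one:
  assumes M: "2 \<le> M" and N: "2 \<le> N"
  shows "\<not> rank_one (ident_tensor M N)"
proof
  assume "rank_one (ident_tensor M N)"
  then obtain a where a: "\<And>i. valid_index (replicate N M) i \<Longrightarrow>
      tent (ident_tensor M N) i = (\<Prod>n<N. a n (i ! n))"
    unfolding rank_one_def ident_tensor_simps(1,2) by blast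
  define R where "R = (\<lambda>c. \<Prod>n<N - 2. a (Suc (Suc n)) (c::nat))"
  let ?zeros = "replicate N (0::nat)"
  let ?ones = "replicate N (1::nat)"
  let ?off = "(replicate N (0::nat))[1 := 1]"
  have valid_zeros: "valid_index (replicate N M) ?zeros" and valid_ones: "valid_index (replicate N M) ?ones"
    and valid_off: "valid_index (replicate N M) ?off"
    using M N by (auto simp: valid_index_def nth_list_update)
  have "?off ! 1 \<noteq> ?off ! 0" using N by simp
  moreover have "1 < N" using N by simp
  ultimately have off_diagonal: "\<not> (\<forall>n<N. ?off ! n = ?off ! 0)" by blast
  have "a 0 0 * (a 1 0 * R 0) = 1"
    using a[OF valid_zeros] valid_zeros N unfolding ident_tensor_simps prod_lessThan_split_first_two[OF N] R_def
    by simp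
  moreover have "a 0 1 * (a 1 1 * R 1) = 1"
    using a[OF valid_ones] valid_ones N unfolding ident_tensor_simps prod_lessThan_split_first_two[OF N] R_def
    by simp
  moreover have "tent (ident_tensor M N) ?off = 0"
    unfolding ident_tensor_simps using off_diagonal by auto
  then have "a 0 0 * (a 1 1 * R 0) = 0"
    using a[OF valid_off] N unfolding prod_lessThan_split_first_two[OF N] R_def by (simp add: nth_list_update)
  ultimately show False by auto
qed

lemma mode_matrix_carrier [simp]:
  "dim_row (mode_matrix X p q) = tdims X ! p" "dim_col (mode_matrix X p q) = tdims X ! q"
  "mode_matrix X p q \<in> carrier_mat (tdims X ! p) (tdims X ! q)"
  by (simp_all add: mode_matrix_def)

lemma index_mode_matrix:
  "x < tdims X ! p \<Longrightarrow> y < tdims X ! q \<Longrightarrow> mode_matrix X p q $$ (x, y) =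
     tent X (map (\<lambda>n. if n = p then x else if n = q then y else 0) [0..<order X])"
  by (simp add: mode_matrix_def)

lemma mode_matrix_scale_tensor: "mode_matrix (scale_tensor c X) p q = c \<cdot>\<^sub>m mode_matrix X p q"
  by (rule eq_matI) (auto simp: index_mode_matrix)

lemma mode_matrix_swap:
  assumes "p \<noteq> q"
  shows "mode_matrix X q p = transpose_mat (mode_matrix X p q)"
  by (rule eq_matI) (use assms in \<open>auto simp: index_mode_matrix intro!: arg_cong[where f = "tent X"]\<close>)

lemma mode_matrix_ident_tensor: "mode_matrix (ident_tensor M 2) 0 1 = 1\<^sub>m M"
proof (rule eq_matI)
  fix i j assume "i < dim_row (1\<^sub>m M)" and "j < dim_col (1\<^sub>m M)"
  then have "i < M" and "j < M" by auto
  moreover have "map (\<lambda>n. if n = 0 then i else if n = 1 then j else 0) [0..<2] = [i, j]"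
    by (simp add: upt_rec)
  moreover have "(\<forall>n<2. [i, j] ! n = [i, j] ! 0) \<longleftrightarrow> i = j"
    by (auto simp: less_2_cases_iff)
  ultimately show "mode_matrix (ident_tensor M 2) 0 1 $$ (i, j) = 1\<^sub>m M $$ (i, j)"
    by (simp add: index_mode_matrix ident_tensor_simps valid_index_def less_2_cases_iff)
qed (auto simp: ident_tensor_simps)

lemma mode_matrix_permute_modes:
  assumes X: "is_tensor X" and \<pi>: "\<pi> permutes {..<order X}"
    and p: "p < order X" and q: "q < order X" and "p \<noteq> q"
  shows "mode_matrix (permute_modes \<pi> X) (\<pi> p) (\<pi> q) = mode_matrix X p q"
proof (rule eq_matI)
  fix x y assume "x < dim_row (mode_matrix X p q)" and "y < dim_col (mode_matrix X p q)"
  then have x: "x < tdims X ! p" and y: "y < tdims X ! q" by auto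
  let ?i = "map (\<lambda>n. if n = \<pi> p then x else if n = \<pi> q then y else 0) [0..<order X]"
  have "?i ! \<pi> k = (if k = p then x else if k = q then y else 0)" if "k < order X" for k
    using that permutes_in_image[OF \<pi>] permutes_inj[OF \<pi>] by (auto dest: injD)
  then have i_\<pi>: "map (\<lambda>k. ?i ! \<pi> k) [0..<order X]
      = map (\<lambda>n. if n = p then x else if n = q then y else 0) [0..<order X]"
    by simp
  have "valid_index (tdims (permute_modes \<pi> X)) ?i"
    unfolding valid_index_permute_modes[OF \<pi>]
    using \<open>\<And>k. k < order X \<Longrightarrow> ?i ! \<pi> k = _\<close> x y tdims_pos[OF X] by auto
  then have "tent (permute_modes \<pi> X) ?i = tent X (map (\<lambda>k. ?i ! \<pi> k) [0..<order X])"
    by (rule tent_permute_modes)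
  then show "mode_matrix (permute_modes \<pi> X) (\<pi> p) (\<pi> q) $$ (x, y) = mode_matrix X p q $$ (x, y)"
    using x y p q \<pi> unfolding i_\<pi> by (simp add: index_mode_matrix tdims_permute_modes_apply)
qed (use \<pi> p q in \<open>auto simp: tdims_permute_modes_apply\<close>)

section \<open>Submatrix ranks as lower bounds for QZC rank functions\<close>

text \<open>The ranks in \<open>submatrix_ranks\<close> that come from genuine two-mode submatrices; the remaining
  ones, from vectors, are at most 1.\<close>

definition matrix_subranks :: "tensor \<Rightarrow> nat set" where
  "matrix_subranks X =
     {k. \<exists>Z p q. subtensor Z X \<and> p < q \<and> q < order X \<and>
          (\<forall>n<order X. n \<noteq> p \<and> n \<noteq> q \<longrightarrow> tdims Z ! n = 1) \<and>
          k = mat_rank (mode_matrix Z p q)}"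

lemma submatrix_ranks_subset: "submatrix_ranks X \<subseteq> matrix_subranks X \<union> {0, 1}"
  unfolding submatrix_ranks_def matrix_subranks_def by auto

lemma submatrix_ranks_mono:
  assumes "subtensor Y X"
  shows "submatrix_ranks Y \<subseteq> submatrix_ranks X"
proof -
  have "order Y = order X" using subtensor_tensors[OF assms] by simp
  then show ?thesis unfolding submatrix_ranks_def
  proof (intro Un_mono subsetI)
    fix k assume "k \<in> {k. \<exists>Z p q. subtensor Z Y \<and> p < q \<and> q < order Y \<and>
          (\<forall>n<order Y. n \<noteq> p \<and> n \<noteq> q \<longrightarrow> tdims Z ! n = 1) \<and>
          k = mat_rank (mode_matrix Z p q)}"
    then obtain Z p q where "subtensor Z Y" "p < q" "q < order Y"
      "\<forall>n<order Y. n \<noteq> p \<and> n \<noteq> q \<longrightarrow> tdims Z ! n = 1" "k = mat_rank (mode_matrix Z p q)"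
      by blast
    then show "k \<in> {k. \<exists>Z p q. subtensor Z X \<and> p < q \<and> q < order X \<and>
          (\<forall>n<order X. n \<noteq> p \<and> n \<noteq> q \<longrightarrow> tdims Z ! n = 1) \<and>
          k = mat_rank (mode_matrix Z p q)}"
      using subtensor_trans[OF _ assms] \<open>order Y = order X\<close> by (intro CollectI exI[of _ Z]) auto
  next
    fix k assume "k \<in> {k. \<exists>Z p. subtensor Z Y \<and> p < order Y \<and>
          (\<forall>n<order Y. n \<noteq> p \<longrightarrow> tdims Z ! n = 1) \<and> k = (if is_zero Z then 0 else 1)}"
    then obtain Z p where "subtensor Z Y" "p < order Y"
      "\<forall>n<order Y. n \<noteq> p \<longrightarrow> tdims Z ! n = 1" "k = (if is_zero Z then 0 else 1)"
      by blast
    then show "k \<in> {k. \<exists>Z p. subtensor Z X \<and> p < order X \<and>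
          (\<forall>n<order X. n \<noteq> p \<longrightarrow> tdims Z ! n = 1) \<and> k = (if is_zero Z then 0 else 1)}"
      using subtensor_trans[OF _ assms] \<open>order Y = order X\<close> by (intro CollectI exI[of _ Z]) auto
  qed
qed

lemma matrix_subranksI:
  assumes "subtensor Z X" and "p \<noteq> q" and "p < order X" and "q < order X"
    and "\<forall>n<order X. n \<noteq> p \<and> n \<noteq> q \<longrightarrow> tdims Z ! n = 1"
  shows "mat_rank (mode_matrix Z p q) \<in> matrix_subranks X"
proof (cases "p < q")
  case True
  then show ?thesis unfolding matrix_subranks_def using assms
    by (intro CollectI exI[of _ Z] exI[of _ p] exI[of _ q]) auto
next
  case False
  then have "q < p" using \<open>p \<noteq> q\<close> by simp
  moreover have "mat_rank (mode_matrix Z p q) = mat_rank (mode_matrix Z q p)"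
    using mode_matrix_swap[OF \<open>p \<noteq> q\<close>] by simp
  ultimately show ?thesis unfolding matrix_subranks_def using assms
    by (intro CollectI exI[of _ Z] exI[of _ q] exI[of _ p]) auto
qed

lemma matrix_subranks_sim_gen:
  assumes "sim_gen A B"
  shows "matrix_subranks A \<subseteq> matrix_subranks B"
proof
  fix k assume "k \<in> matrix_subranks A"
  then obtain Z p q where Z: "subtensor Z A" and pq: "p < q" "q < order A"
    and flat: "\<forall>n<order A. n \<noteq> p \<and> n \<noteq> q \<longrightarrow> tdims Z ! n = 1"
    and k: "k = mat_rank (mode_matrix Z p q)"
    unfolding matrix_subranks_def by blast
  have Z_tensor: "is_tensor Z" and order: "order Z = order A" using subtensor_tensors[OF Z] by auto
  from assms show "k \<in> matrix_subranks B"
  proof (cases rule: sim_gen_cases)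
    case (scale c)
    have "mat_rank (mode_matrix (scale_tensor c Z) p q) \<in> matrix_subranks B"
      using matrix_subranksI[OF subtensor_scale_tensor[OF Z]] pq flat scale by simp
    then show ?thesis using k scale(1) by (simp add: mode_matrix_scale_tensor mat_rank_smult)
  next
    case (permute \<pi>)
    have "\<pi> p < order A" "\<pi> q < order A" "\<pi> p \<noteq> \<pi> q"
      using permutes_in_image[OF permute(1)] permutes_inj[OF permute(1)] pq by (auto dest: injD)
    then have "mat_rank (mode_matrix (permute_modes \<pi> Z) (\<pi> p) (\<pi> q)) \<in> matrix_subranks B"
      using matrix_subranksI[OF subtensor_permute_modes[OF Z permute(1)]]
        tdims_permute_modes_eq_1[of \<pi> Z p q] permute flat order by simp
    then show ?thesis
      using k mode_matrix_permute_modes[OF Z_tensor] permute(1) pq order by simp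
  qed
qed

lemma matrix_subranks_tsim:
  assumes "tsim X Y" and "is_tensor X"
  shows "matrix_subranks Y \<subseteq> matrix_subranks X"
  using tsim_sym[OF assms(1)] tsim_tensor[OF assms]
  by (induction rule: tsim_induct) (auto dest: matrix_subranks_sim_gen)

definition modes_to_front :: "nat \<Rightarrow> nat \<Rightarrow> nat \<Rightarrow> nat" where
  "modes_to_front p q = Transposition.transpose 1 q \<circ> Transposition.transpose 0 p"

lemma modes_to_front:
  assumes "p < q" and "q < N"
  shows "modes_to_front p q permutes {..<N}" "modes_to_front p q p = 0" "modes_to_front p q q = 1"
proof -
  show "modes_to_front p q permutes {..<N}" unfolding modes_to_front_def
    by (rule permutes_compose[OF permutes_swap_id permutes_swap_id]) (use assms in auto)
  show "modes_to_front p q p = 0" "modes_to_front p q q = 1"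
    unfolding modes_to_front_def using assms by (auto simp: Transposition.transpose_def)
qed

lemma
  assumes "QZC s"
  shows QZC_zero_rank_one: "is_tensor X \<Longrightarrow> (s X = 0 \<longleftrightarrow> is_zero X) \<and> (s X = 1 \<longleftrightarrow> rank_one X)"
    and QZC_ident_tensor: "1 \<le> M \<Longrightarrow> 2 \<le> N \<Longrightarrow> s (ident_tensor M N) = M"
    and QZC_matrix_shaped: "is_tensor X \<Longrightarrow> 2 \<le> order X \<Longrightarrow>
      (\<forall>n. 2 \<le> n \<and> n < order X \<longrightarrow> tdims X ! n = 1) \<Longrightarrow> s X = mat_rank (mode_matrix X 0 1)"
    and QZC_scale_tensor: "is_tensor X \<Longrightarrow> \<alpha> \<noteq> 0 \<Longrightarrow> s (scale_tensor \<alpha> X) = s X"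
    and QZC_mode_perm: "mode_perm X Y \<Longrightarrow> s Y = s X"
    and QZC_subtensor: "subtensor Y X \<Longrightarrow> s Y \<le> s X"
  using assms unfolding QZC_def by blast+

lemma QZC_tsim:
  assumes "QZC s" and "tsim X Y" and "is_tensor X"
  shows "s Y = s X"
  using assms(2,3)
proof (induction rule: tsim_induct)
  case (step A B)
  from \<open>sim_gen A B\<close> show ?case
  proof (cases rule: sim_gen_cases)
    case (scale c)
    then show ?thesis using QZC_scale_tensor[OF assms(1) \<open>is_tensor A\<close>] step by simp
  next
    case (permute \<pi>)
    then show ?thesis
      using QZC_mode_perm[OF assms(1) mode_perm_permute_modes[OF \<open>is_tensor A\<close>]] step by simp
  qed
qed simp

lemma QZC_mode_matrix:
  assumes Q: "QZC s" and Z: "is_tensor Z" and pq: "p < q" "q < order Z"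
    and flat: "\<forall>n<order Z. n \<noteq> p \<and> n \<noteq> q \<longrightarrow> tdims Z ! n = 1"
  shows "s Z = mat_rank (mode_matrix Z p q)"
proof -
  let ?\<pi> = "modes_to_front p q"
  let ?Z = "permute_modes ?\<pi> Z"
  note \<pi> = modes_to_front[OF pq]
  have "\<forall>n<order Z. n \<noteq> 0 \<and> n \<noteq> 1 \<longrightarrow> tdims ?Z ! n = 1"
    using tdims_permute_modes_eq_1[OF \<pi>(1) flat] \<pi>(2,3) by simp
  then have trailing: "\<forall>n. 2 \<le> n \<and> n < order ?Z \<longrightarrow> tdims ?Z ! n = 1" by simp
  have "s Z = s ?Z" using QZC_mode_perm[OF Q mode_perm_permute_modes[OF Z \<pi>(1)]] by simp
  also have "\<dots> = mat_rank (mode_matrix ?Z 0 1)"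
    using QZC_matrix_shaped[OF Q is_tensor_permute_modes[OF Z \<pi>(1)] _ trailing] pq by simp
  also have "mode_matrix ?Z 0 1 = mode_matrix Z p q"
    using mode_matrix_permute_modes[OF Z \<pi>(1), of p q] pq \<pi>(2,3) by simp
  finally show ?thesis .
qed

lemma QZC_matrix_subranks_le:
  assumes "QZC s" and "k \<in> matrix_subranks X"
  shows "k \<le> s X"
proof -
  obtain Z p q where Z: "subtensor Z X" and "p < q" and "q < order X"
    and "\<forall>n<order X. n \<noteq> p \<and> n \<noteq> q \<longrightarrow> tdims Z ! n = 1" and "k = mat_rank (mode_matrix Z p q)"
    using assms(2) unfolding matrix_subranks_def by blast
  then have "k = s Z" using QZC_mode_matrix[OF assms(1)] subtensor_tensors[OF Z] by simp
  also have "\<dots> \<le> s X" using QZC_subtensor[OF assms(1) Z] .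
  finally show ?thesis .
qed

definition rank_witnesses :: "tensor \<Rightarrow> nat set" where
  "rank_witnesses X =
     {M. \<exists>Y. tsim X Y \<and> subtensor (ident_tensor M (order X)) Y}
     \<union> {k. \<exists>Y. tsim X Y \<and> k \<in> submatrix_ranks Y} \<union> {2}"

lemma two_in_rank_witnesses: "2 \<in> rank_witnesses X"
  by (simp add: rank_witnesses_def)

lemma rank_witnesses_cases:
  assumes "k \<in> rank_witnesses X"
  obtains (ident) Y where "tsim X Y" and "subtensor (ident_tensor k (order X)) Y"
  | (matrix) Y where "tsim X Y" and "k \<in> matrix_subranks Y"
  | (small) "k \<le> 2"
  using assms submatrix_ranks_subset unfolding rank_witnesses_def by fastforce

lemma rank_witnesses_le:
  assumes X: "is_tensor X" and D: "\<forall>d\<in>set (tdims X). d \<le> D" and k: "k \<in> rank_witnesses X"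
  shows "k \<le> max D 2"
  using k
proof (cases rule: rank_witnesses_cases)
  case (ident Y)
  have "0 < order X" using order_pos[OF X] .
  then have "k \<le> tdims Y ! 0"
    using subtensor_tdims_le[OF ident(2)] subtensor_tensors[OF ident(2)] by (simp add: ident_tensor_simps)
  moreover have "tdims Y ! 0 \<in> set (tdims X)"
    using tsim_set_tdims[OF ident(1) X] tsim_order[OF ident(1) X] \<open>0 < order X\<close>
    by (metis length_tdims nth_mem)
  ultimately show ?thesis using D by fastforce
next
  case (matrix Y)
  then obtain Z p q where Z: "subtensor Z Y" and pq: "p < q" "q < order Y"
    and "k = mat_rank (mode_matrix Z p q)"
    unfolding matrix_subranks_def by blast
  then have "k \<le> tdims Z ! p" using mat_rank_le_dim_row[of "mode_matrix Z p q"] by simp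
  also have "\<dots> \<le> tdims Y ! p" using subtensor_tdims_le[OF Z] pq by simp
  also have "\<dots> \<le> D"
    using D tsim_set_tdims[OF matrix(1) X] pq by (metis length_tdims nth_mem order.strict_trans)
  finally show ?thesis by simp
qed simp

lemma finite_rank_witnesses:
  assumes "is_tensor X"
  shows "finite (rank_witnesses X)"
proof -
  have "\<forall>d\<in>set (tdims X). d \<le> sum_list (tdims X)" by (simp add: member_le_sum_list)
  then have "rank_witnesses X \<subseteq> {..max (sum_list (tdims X)) 2}"
    using rank_witnesses_le[OF assms] by blast
  then show ?thesis by (rule finite_subset) simp
qed

lemma rank_witnesses_mono:
  assumes "subtensor Y X"
  shows "rank_witnesses Y \<subseteq> rank_witnesses X"
proof -
  have "order Y = order X" using subtensor_tensors[OF assms] by simp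
  show ?thesis unfolding rank_witnesses_def \<open>order Y = order X\<close>
  proof (intro Un_mono subsetI)
    fix M assume "M \<in> {M. \<exists>Y'. tsim Y Y' \<and> subtensor (ident_tensor M (order X)) Y'}"
    then obtain Y' where "tsim Y Y'" and I: "subtensor (ident_tensor M (order X)) Y'" by blast
    then obtain X' where "tsim X X'" and "subtensor Y' X'" using tsim_lift_subtensor[OF _ assms] by blast
    then show "M \<in> {M. \<exists>X'. tsim X X' \<and> subtensor (ident_tensor M (order X)) X'}"
      using subtensor_trans[OF I] by blast
  next
    fix k assume "k \<in> {k. \<exists>Y'. tsim Y Y' \<and> k \<in> submatrix_ranks Y'}"
    then obtain Y' where "tsim Y Y'" and k: "k \<in> submatrix_ranks Y'" by blast
    then obtain X' where "tsim X X'" and "subtensor Y' X'" using tsim_lift_subtensor[OF _ assms] by blast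
    then show "k \<in> {k. \<exists>X'. tsim X X' \<and> k \<in> submatrix_ranks X'}"
      using submatrix_ranks_mono k by blast
  qed simp
qed

lemma QZC_ge_rank_witnesses:
  assumes Q: "QZC s" and X: "is_tensor X" and "\<not> is_zero X" and "\<not> rank_one X"
    and k: "k \<in> rank_witnesses X"
  shows "k \<le> s X"
proof -
  have s_ge_2: "2 \<le> s X" using QZC_zero_rank_one[OF Q X] assms(3,4) by auto
  from k show ?thesis
  proof (cases rule: rank_witnesses_cases)
    case (ident Y)
    have "order X \<noteq> 1" using order_1_zero_or_rank_one[OF X] assms(3,4) by blast
    then have "2 \<le> order X" using order_pos[OF X] by linarith
    moreover have "1 \<le> k"
      using is_tensor_ident_tensorD subtensor_tensors[OF ident(2)] by blast
    ultimately have "k = s (ident_tensor k (order X))" using QZC_ident_tensor[OF Q] by simp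
    also have "\<dots> \<le> s Y" using QZC_subtensor[OF Q ident(2)] .
    also have "\<dots> = s X" using QZC_tsim[OF Q ident(1) X] .
    finally show ?thesis .
  next
    case (matrix Y)
    then show ?thesis using QZC_matrix_subranks_le[OF Q] QZC_tsim[OF Q _ X] by metis
  qed (use s_ge_2 in simp)
qed

lemma Max_rank_witnesses_ident_tensor:
  assumes M: "2 \<le> M" and N: "2 \<le> N"
  shows "Max (rank_witnesses (ident_tensor M N)) = M"
proof (rule Max_eqI)
  have I: "is_tensor (ident_tensor M N)" using is_tensor_ident_tensor M N by simp
  then show "finite (rank_witnesses (ident_tensor M N))" by (rule finite_rank_witnesses)
  show "k \<le> M" if "k \<in> rank_witnesses (ident_tensor M N)" for k
    using rank_witnesses_le[OF I _ that, of M] M by (simp add: ident_tensor_simps)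
  show "M \<in> rank_witnesses (ident_tensor M N)"
    unfolding rank_witnesses_def using subtensor_refl[OF I] tsim_refl
    by (intro UnI1 CollectI exI[of _ "ident_tensor M N"]) (simp add: ident_tensor_simps)
qed

section \<open>Tensors of matrix shape\<close>

locale matrix_shaped_tensor =
  fixes X :: tensor
  assumes is_tensor: "is_tensor X" and order_ge_2: "2 \<le> order X"
    and trailing_dims: "\<forall>n. 2 \<le> n \<and> n < order X \<longrightarrow> tdims X ! n = 1"
begin

abbreviation matrix :: "real mat" where "matrix \<equiv> mode_matrix X 0 1"

lemma valid_index_bounds:
  assumes "valid_index (tdims X) i"
  shows "i ! 0 < tdims X ! 0" and "i ! 1 < tdims X ! 1"
  using assms order_ge_2 unfolding valid_index_def by (auto simp: length_tdims)

lemma valid_index_eq: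
  assumes i: "valid_index (tdims X) i"
  shows "i = map (\<lambda>n. if n = 0 then i ! 0 else if n = 1 then i ! 1 else 0) [0..<order X]"
proof (rule nth_equalityI)
  fix n assume "n < length i"
  then have n: "n < order X" using i unfolding valid_index_def by (simp add: length_tdims)
  show "i ! n = map (\<lambda>n. if n = 0 then i ! 0 else if n = 1 then i ! 1 else 0) [0..<order X] ! n"
  proof (cases "2 \<le> n")
    case True
    then have "i ! n < 1" using i trailing_dims n unfolding valid_index_def by (auto simp: length_tdims)
    then show ?thesis using True n by simp
  next
    case False
    then have "n = 0 \<or> n = 1" by auto
    then show ?thesis using n by auto
  qed
qed (use i in \<open>simp add: valid_index_def length_tdims\<close>)

lemma tent_eq_matrix:
  assumes "valid_index (tdims X) i"
  shows "tent X i = matrix $$ (i ! 0, i ! 1)"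
  using index_mode_matrix[OF valid_index_bounds[OF assms]] valid_index_eq[OF assms] by simp

lemma mat_rank_matrix_0_iff: "mat_rank matrix = 0 \<longleftrightarrow> is_zero X"
proof
  assume rank: "mat_rank matrix = 0"
  have "tent X i = 0" for i
  proof (cases "valid_index (tdims X) i")
    case True
    then show ?thesis using tent_eq_matrix mat_rank_0_entries[OF rank] valid_index_bounds by simp
  qed (use tent_invalid[OF is_tensor] in auto)
  then show "is_zero X" unfolding is_zero_def by simp
next
  assume "is_zero X"
  then have "matrix = 0\<^sub>m (tdims X ! 0) (tdims X ! 1)"
    by (intro eq_matI) (auto simp: index_mode_matrix is_zero_def)
  then show "mat_rank matrix = 0" unfolding mat_rank_def using vec_space.rank_0I by simp
qed

lemma mat_rank_matrix_le_1_iff: "mat_rank matrix \<le> 1 \<longleftrightarrow> is_zero X \<or> rank_one X"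
proof
  assume "mat_rank matrix \<le> 1"
  then obtain f g where fg: "\<forall>x<tdims X ! 0. \<forall>y<tdims X ! 1. matrix $$ (x, y) = f x * g y"
    unfolding mat_rank_le_1_iff by auto
  let ?a = "\<lambda>n::nat. if n = 0 then f else if n = 1 then g else (\<lambda>_. 1)"
  show "is_zero X \<or> rank_one X"
  proof (rule zero_or_rank_one_if_product[OF is_tensor])
    fix i assume "valid_index (tdims X) i"
    then show "tent X i = (\<Prod>n<order X. ?a n (i ! n))"
      using tent_eq_matrix fg valid_index_bounds by (simp add: prod_lessThan_split_first_two[OF order_ge_2])
  qed
next
  assume "is_zero X \<or> rank_one X"
  then show "mat_rank matrix \<le> 1"
  proof
    assume "rank_one X"
    then obtain a where a: "\<forall>i. valid_index (tdims X) i \<longrightarrow> tent X i = (\<Prod>n<order X. a n (i ! n))"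
      unfolding rank_one_def by blast
    define c where "c = (\<Prod>n<order X - 2. a (Suc (Suc n)) 0)"
    have "matrix $$ (x, y) = (a 0 x * c) * a 1 y" if "x < tdims X ! 0" and "y < tdims X ! 1" for x y
    proof -
      let ?i = "map (\<lambda>n. if n = 0 then x else if n = 1 then y else 0) [0..<order X]"
      have "valid_index (tdims X) ?i"
        using that trailing_dims tdims_pos[OF is_tensor] unfolding valid_index_def by (auto simp: length_tdims)
      then have "tent X ?i = a 0 x * (a 1 y * c)"
        using a order_ge_2 by (simp add: prod_lessThan_split_first_two[OF order_ge_2] c_def)
      moreover have "matrix $$ (x, y) = tent X ?i" by (rule index_mode_matrix[OF that])
      ultimately show ?thesis by simp
    qed
    then show ?thesis unfolding mat_rank_le_1_iff by auto
  qed (use mat_rank_matrix_0_iff in auto)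
qed

lemma mode_matrix_subtensor:
  assumes \<sigma>: "subtensor_via \<sigma> Z X" and Z: "is_tensor Z" and order: "order Z = order X"
  shows "mode_matrix Z 0 1 = mat (tdims Z ! 0) (tdims Z ! 1) (\<lambda>(x, y). matrix $$ (\<sigma> 0 x, \<sigma> 1 y))"
proof (rule eq_matI)
  fix x y assume "x < dim_row (mat (tdims Z ! 0) (tdims Z ! 1) (\<lambda>(x, y). matrix $$ (\<sigma> 0 x, \<sigma> 1 y)))"
    and "y < dim_col (mat (tdims Z ! 0) (tdims Z ! 1) (\<lambda>(x, y). matrix $$ (\<sigma> 0 x, \<sigma> 1 y)))"
  then have x: "x < tdims Z ! 0" and y: "y < tdims Z ! 1" by auto
  let ?i = "map (\<lambda>n. if n = 0 then x else if n = 1 then y else 0) [0..<order Z]"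
  let ?j = "map (\<lambda>n. \<sigma> n (?i ! n)) [0..<order X]"
  have i: "valid_index (tdims Z) ?i"
    using x y tdims_pos[OF Z] unfolding valid_index_def by (auto simp: length_tdims)
  have "?j ! 0 = \<sigma> 0 x" and "?j ! 1 = \<sigma> 1 y" using order_ge_2 order by auto
  moreover have "mode_matrix Z 0 1 $$ (x, y) = tent Z ?i" by (rule index_mode_matrix[OF x y])
  moreover have "\<dots> = tent X ?j" using \<sigma> i unfolding subtensor_via_def by blast
  moreover have "\<dots> = matrix $$ (?j ! 0, ?j ! 1)"
    by (rule tent_eq_matrix[OF subtensor_via_valid_index[OF \<sigma> order i]])
  ultimately show "mode_matrix Z 0 1 $$ (x, y) =
      mat (tdims Z ! 0) (tdims Z ! 1) (\<lambda>(x, y). matrix $$ (\<sigma> 0 x, \<sigma> 1 y)) $$ (x, y)"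
    using x y by simp
qed auto

lemma matrix_subranks_le:
  assumes "k \<in> matrix_subranks X"
  shows "k \<le> max 1 (mat_rank matrix)"
proof -
  obtain Z p q where Z: "subtensor Z X" and pq: "p < q" "q < order X"
    and k: "k = mat_rank (mode_matrix Z p q)"
    using assms unfolding matrix_subranks_def by blast
  show ?thesis
  proof (cases "q = 1")
    case True
    then have "p = 0" using pq by simp
    obtain \<sigma> where \<sigma>: "subtensor_via \<sigma> Z X" and Z_tensor: "is_tensor Z" and order: "order Z = order X"
      using Z unfolding subtensor_iff_via by blast
    have "\<forall>j<tdims Z ! 0. \<sigma> 0 j < tdims X ! 0" and "\<forall>j<tdims Z ! 1. \<sigma> 1 j < tdims X ! 1"
      using \<sigma> order_ge_2 unfolding subtensor_via_def by auto
    then have "mat_rank (mode_matrix Z 0 1) \<le> mat_rank matrix"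
      unfolding mode_matrix_subtensor[OF \<sigma> Z_tensor order]
      by (intro mat_rank_reindex_le[OF mode_matrix_carrier(3)]) auto
    then show ?thesis using k True \<open>p = 0\<close> by simp
  next
    case False
    then have "2 \<le> q" using pq by simp
    have "k \<le> tdims Z ! q" using k mat_rank_le_dim_col[of "mode_matrix Z p q"] by simp
    also have "\<dots> \<le> tdims X ! q" using subtensor_tdims_le[OF Z pq(2)] .
    also have "\<dots> = 1" using trailing_dims \<open>2 \<le> q\<close> pq by simp
    finally show ?thesis by simp
  qed
qed

lemma diagonal_subtensor_size_le:
  assumes "tsim X Y" and "subtensor (ident_tensor k (order X)) Y"
  shows "k \<le> max 1 (mat_rank matrix)"
proof -
  have order_Y: "order Y = order X" using tsim_order[OF assms(1) is_tensor] .
  show ?thesis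
  proof (cases "order X = 2")
    case True
    \<comment> \<open>A diagonal subtensor of a matrix is a submatrix; its rank is its size.\<close>
    have "mat_rank (mode_matrix (ident_tensor k 2) 0 1) \<in> matrix_subranks Y"
      using matrix_subranksI[of "ident_tensor k 2" Y 0 1] assms(2) True order_Y by simp
    then have "k \<in> matrix_subranks X"
      using matrix_subranks_tsim[OF assms(1) is_tensor] unfolding mode_matrix_ident_tensor by auto
    then show ?thesis by (rule matrix_subranks_le)
  next
    case False
    \<comment> \<open>Some mode of Y has size 1, since \<sim> preserves the set of mode sizes.\<close>
    then have "1 \<in> set (tdims X)"
      using order_ge_2 trailing_dims by (metis length_tdims le_refl nat_less_le nth_mem)
    then obtain m where "m < order Y" and "tdims Y ! m = 1"
      using tsim_set_tdims[OF assms(1) is_tensor] by (metis in_set_conv_nth length_tdims)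
    then have "k \<le> 1"
      using subtensor_tdims_le[OF assms(2)] order_Y by (fastforce simp: ident_tensor_simps)
    then show ?thesis by simp
  qed
qed

lemma Max_rank_witnesses:
  assumes "\<not> is_zero X" and "\<not> rank_one X"
  shows "Max (rank_witnesses X) = mat_rank matrix"
proof (rule Max_eqI)
  have rank_ge_2: "2 \<le> mat_rank matrix" using mat_rank_matrix_le_1_iff assms by linarith
  show "finite (rank_witnesses X)" using finite_rank_witnesses[OF is_tensor] .
  have "mat_rank matrix \<in> submatrix_ranks X"
    unfolding submatrix_ranks_def using subtensor_refl[OF is_tensor] order_ge_2 trailing_dims
    by (intro UnI1 CollectI exI[of _ X] exI[of _ 0] exI[of _ 1]) auto
  then show "mat_rank matrix \<in> rank_witnesses X" unfolding rank_witnesses_def using tsim_refl by blast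
  fix k assume "k \<in> rank_witnesses X"
  then show "k \<le> mat_rank matrix"
  proof (cases rule: rank_witnesses_cases)
    case (ident Y)
    then show ?thesis using diagonal_subtensor_size_le rank_ge_2 by fastforce
  next
    case (matrix Y)
    then show ?thesis
      using matrix_subranks_tsim[OF matrix(1) is_tensor] matrix_subranks_le rank_ge_2 by fastforce
  qed (use rank_ge_2 in simp)
qed

end

section \<open>The minimal QZC rank function\<close>

lemma mu_eqI:
  assumes "QZC r" and "\<And>s. QZC s \<Longrightarrow> r X \<le> s X"
  shows "mu X = r X"
  unfolding mu_def using assms by (intro cInf_eq_minimum) auto

locale max_witness_rank =
  fixes r :: "tensor \<Rightarrow> nat"
  assumes zero_rank_one: "\<And>X. is_tensor X \<Longrightarrow> (r X = 0 \<longleftrightarrow> is_zero X) \<and> (r X = 1 \<longleftrightarrow> rank_one X)"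
    and tsim_invariant: "\<And>X Y. is_tensor X \<Longrightarrow> tsim X Y \<Longrightarrow> r Y = r X"
    and max_rank_witnesses:
      "\<And>X. is_tensor X \<Longrightarrow> \<not> is_zero X \<Longrightarrow> \<not> rank_one X \<Longrightarrow> r X = Max (rank_witnesses X)"
begin

lemma r_ident_tensor:
  assumes M: "1 \<le> M" and N: "2 \<le> N"
  shows "r (ident_tensor M N) = M"
proof (cases "M = 1")
  case True
  then show ?thesis
    using zero_rank_one is_tensor_ident_tensor rank_one_ident_tensor_1 N by simp
next
  case False
  then have "2 \<le> M" using M by simp
  then show ?thesis
    using max_rank_witnesses is_tensor_ident_tensor ident_tensor_not_zero ident_tensor_not_rank_one
      Max_rank_witnesses_ident_tensor N by simp
qed

lemma r_matrix_shaped: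
  assumes "matrix_shaped_tensor X"
  shows "r X = mat_rank (mode_matrix X 0 1)"
proof -
  interpret matrix_shaped_tensor X by fact
  consider "is_zero X" | "rank_one X" | "\<not> is_zero X" "\<not> rank_one X" by blast
  then show ?thesis
  proof cases
    case 1
    then show ?thesis using zero_rank_one[OF is_tensor] mat_rank_matrix_0_iff by simp
  next
    case 2
    then have "r X = 1" and "\<not> is_zero X" using zero_rank_one[OF is_tensor] by auto
    then have "mat_rank matrix = 1"
      using mat_rank_matrix_0_iff mat_rank_matrix_le_1_iff 2 by (metis le_antisym less_one not_le)
    then show ?thesis using \<open>r X = 1\<close> by simp
  next
    case 3
    then show ?thesis using max_rank_witnesses[OF is_tensor] Max_rank_witnesses by simp
  qed
qed

lemma r_subtensor:
  assumes YX: "subtensor Y X"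
  shows "r Y \<le> r X"
proof -
  have Y: "is_tensor Y" and X: "is_tensor X" using subtensor_tensors[OF YX] by auto
  consider "is_zero Y" | "rank_one Y" | "\<not> is_zero Y" "\<not> rank_one Y" by blast
  then show ?thesis
  proof cases
    case 2
    then have "r Y = 1" and "\<not> is_zero Y" using zero_rank_one[OF Y] by auto
    then have "r X \<noteq> 0" using subtensor_zero[OF YX] zero_rank_one[OF X] by blast
    then show ?thesis using \<open>r Y = 1\<close> by simp
  next
    case 3
    then have "\<not> is_zero X" and "\<not> rank_one X"
      using subtensor_zero[OF YX] subtensor_rank_one[OF YX] by auto
    then show ?thesis
      using max_rank_witnesses[OF Y 3] max_rank_witnesses[OF X]
        Max_mono[OF rank_witnesses_mono[OF YX] _ finite_rank_witnesses[OF X]] two_in_rank_witnesses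
      by fastforce
  qed (use zero_rank_one[OF Y] in simp)
qed

lemma QZC_r: "QZC r"
proof (unfold QZC_def, intro conjI allI impI)
  fix X assume "is_tensor X"
  then show "r X = 0 \<longleftrightarrow> is_zero X" using zero_rank_one by blast
next
  fix X assume "is_tensor X"
  then show "r X = 1 \<longleftrightarrow> rank_one X" using zero_rank_one by blast
next
  fix M N :: nat assume "1 \<le> M" and "2 \<le> N"
  then show "r (ident_tensor M N) = M" by (rule r_ident_tensor)
next
  fix X assume "is_tensor X" and "2 \<le> order X" and "\<forall>n. 2 \<le> n \<and> n < order X \<longrightarrow> tdims X ! n = 1"
  then show "r X = mat_rank (mode_matrix X 0 1)" by (intro r_matrix_shaped matrix_shaped_tensor.intro)
next
  fix X and \<alpha> :: real assume "is_tensor X" and "\<alpha> \<noteq> 0"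
  then show "r (scale_tensor \<alpha> X) = r X"
    using tsim_invariant sim_gen_imp_tsim[OF sim_gen_scale_tensor] by blast
next
  fix X Y assume "mode_perm X Y"
  then show "r Y = r X"
    using tsim_invariant sim_gen_imp_tsim unfolding sim_gen_def mode_perm_def by blast
next
  fix X Y assume "subtensor Y X"
  then show "r Y \<le> r X" by (rule r_subtensor)
qed

lemma r_le_QZC:
  assumes Q: "QZC s" and X: "is_tensor X"
  shows "r X \<le> s X"
proof -
  consider "is_zero X \<or> rank_one X" | "\<not> is_zero X" "\<not> rank_one X" by blast
  then show ?thesis
  proof cases
    case 1
    then show ?thesis using zero_rank_one[OF X] QZC_zero_rank_one[OF Q X] by (cases "s X") auto
  next
    case 2
    have "Max (rank_witnesses X) \<le> s X"
      using QZC_ge_rank_witnesses[OF Q X 2] finite_rank_witnesses[OF X] two_in_rank_witnesses[of X]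
      by (intro Max.boundedI) auto
    then show ?thesis using max_rank_witnesses[OF X 2] by simp
  qed
qed

lemma mu_eq_r: "is_tensor X \<Longrightarrow> mu X = r X"
  using mu_eqI QZC_r r_le_QZC by blast

end

theorem proposition3p7:
  fixes r :: "tensor \<Rightarrow> nat"
  assumes r1: "\<forall>X. is_tensor X \<longrightarrow> (r X = 0 \<longleftrightarrow> is_zero X) \<and> (r X = 1 \<longleftrightarrow> rank_one X)"
    and r2: "\<forall>X Y. is_tensor X \<longrightarrow> is_tensor Y \<longrightarrow> tsim X Y \<longrightarrow> r X = r Y"
    and r3: "\<forall>X. is_tensor X \<longrightarrow> \<not> is_zero X \<longrightarrow> \<not> rank_one X \<longrightarrow>
               r X = Max ({M. \<exists>Y. tsim X Y \<and> subtensor (ident_tensor M (order X)) Y}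
                          \<union> {k. \<exists>Y. tsim X Y \<and> k \<in> submatrix_ranks Y} \<union> {2})"
  shows "\<forall>X. is_tensor X \<longrightarrow> r X = mu X"
proof -
  interpret max_witness_rank r
  proof
    show "\<And>X. is_tensor X \<Longrightarrow> (r X = 0 \<longleftrightarrow> is_zero X) \<and> (r X = 1 \<longleftrightarrow> rank_one X)"
      using r1 by blast
    show "\<And>X Y. is_tensor X \<Longrightarrow> tsim X Y \<Longrightarrow> r Y = r X"
      using r2 tsim_tensor by metis
    show "\<And>X. is_tensor X \<Longrightarrow> \<not> is_zero X \<Longrightarrow> \<not> rank_one X \<Longrightarrow> r X = Max (rank_witnesses X)"
      using r3 unfolding rank_witnesses_def by blast
  qed
  show ?thesis using mu_eq_r by simp
qed

end
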